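(* Let $X$ be a standard (mean $0$, variance $1$) Gaussian, let $x,\hat x\in\mathbb R$, let $Z$ have the law of $X+x$ conditioned on $X+x>0$, and let $\hat Z$ have the law of $X+\hat x$ conditioned on $X+\hat x>0$. Then there is a coupling of $Z$ and $\hat Z$ such that $|Z-\hat Z|<|x-\hat x|$ almost surely if $x\neq\hat x$. Moreover, there is a continuous function $\delta(x,\hat x)$ with $\delta(x,\hat x)<1$ for all $x,\hat x$ such that under this coupling $\mathbf E[|Z-\hat Z|]\le\delta(x,\hat x)|x-\hat x|$. *)

theory Defs
  imports "HOL-Probability.Probability"
begin

definition std_gauss :: "real measure" where
  "std_gauss = density lborel std_normal_density"

definition cond_shifted_gauss :: "real \<Rightarrow> real measure" where
  "cond_shifted_gauss x = uniform_measure (distr std_gauss borel (\<lambda>t. t + x)) {0<..}"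

definition is_coupling :: "(real \<times> real) measure \<Rightarrow> real measure \<Rightarrow> real measure \<Rightarrow> bool" where
  "is_coupling mu P Q \<longleftrightarrow> prob_space mu \<and> sets mu = sets (borel \<Otimes>\<^sub>M borel)
     \<and> distr mu borel fst = P \<and> distr mu borel snd = Q"

end

(* The two conditioned laws are coupled monotonically (quantile coupling): z is sent to the point
   T z at which the tail of the law for x' takes the value that the tail of the law for x takes
   at z. For x < x', log-concavity of the Gaussian tail makes the conditioned laws stochastically
   increasing in the shift, so z <= T z, while the shifted point z + (x' - x) has a strictly
   smaller conditional tail, so T z < z + (x' - x). Hence |Z - Z'| = Z' - Z, whose mean is
   m x' - m x for the conditional mean m x = x + phi x / P(X > -x). The function delta is the
   divided difference of m; by the mean value theorem it is a value of
   m' = 1 - phi m / P(X > -x), which is < 1 because m > 0. *)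

theory Submission
  imports Defs "HOL-Real_Asymp.Real_Asymp"
begin

section \<open>Divided differences\<close>

definition divided_diff :: "(real \<Rightarrow> real) \<Rightarrow> (real \<Rightarrow> real) \<Rightarrow> real \<times> real \<Rightarrow> real" where
  "divided_diff f f' p =
    (if fst p = snd p then f' (fst p) else (f (fst p) - f (snd p)) / (fst p - snd p))"

lemma divided_diff_mean_value:
  assumes "\<And>x. (f has_real_derivative f' x) (at x)"
  obtains \<xi> where "min (fst p) (snd p) \<le> \<xi>" "\<xi> \<le> max (fst p) (snd p)" "divided_diff f f' p = f' \<xi>"
proof -
  obtain a b where p: "p = (a, b)"
    by fastforce
  show thesis
  proof (cases a b rule: linorder_cases)
    case less
    then obtain \<xi> where "a < \<xi>" "\<xi> < b" "f b - f a = (b - a) * f' \<xi>"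
      using MVT2[OF less assms] by blast
    with less show thesis
      by (intro that[of \<xi>]) (simp_all add: p divided_diff_def field_simps)
  next
    case equal
    then show thesis
      by (intro that[of a]) (simp_all add: p divided_diff_def)
  next
    case greater
    then obtain \<xi> where "b < \<xi>" "\<xi> < a" "f a - f b = (a - b) * f' \<xi>"
      using MVT2[OF greater assms] by blast
    with greater show thesis
      by (intro that[of \<xi>]) (simp_all add: p divided_diff_def field_simps)
  qed
qed

lemma divided_diff_mult_abs: "divided_diff f f' (a, b) * \<bar>a - b\<bar> = sgn (a - b) * (f a - f b)"
  by (cases a b rule: linorder_cases) (simp_all add: divided_diff_def field_simps)

lemma isCont_divided_diff_diagonal:
  assumes "\<And>x. (f has_real_derivative f' x) (at x)" "isCont f' c"
  shows "isCont (divided_diff f f') (c, c)"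
  unfolding continuous_at_eps_delta
proof (intro allI impI)
  fix e :: real
  assume "0 < e"
  then obtain r where "0 < r" and r: "\<And>\<xi>. dist \<xi> c < r \<Longrightarrow> dist (f' \<xi>) (f' c) < e"
    using assms(2) unfolding continuous_at_eps_delta by blast
  have "dist (divided_diff f f' q) (divided_diff f f' (c, c)) < e" if "dist q (c, c) < r" for q
  proof -
    obtain \<xi> where \<xi>: "min (fst q) (snd q) \<le> \<xi>" "\<xi> \<le> max (fst q) (snd q)"
      and "divided_diff f f' q = f' \<xi>"
      using divided_diff_mean_value[OF assms(1)] by blast
    moreover have "dist (fst q) c < r" "dist (snd q) c < r"
      using that dist_fst_le[of q "(c, c)"] dist_snd_le[of q "(c, c)"] by simp_all
    with \<xi> have "dist \<xi> c < r"
      by (auto simp: dist_real_def abs_less_iff)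
    ultimately show ?thesis
      using r by (simp add: divided_diff_def)
  qed
  with \<open>0 < r\<close> show "\<exists>r>0. \<forall>q. dist q (c, c) < r \<longrightarrow> dist (divided_diff f f' q) (divided_diff f f' (c, c)) < e"
    by blast
qed

lemma continuous_on_divided_diff:
  assumes "\<And>x. (f has_real_derivative f' x) (at x)" "continuous_on UNIV f'"
  shows "continuous_on UNIV (divided_diff f f')"
proof -
  have "isCont (divided_diff f f') p" for p
  proof (cases "fst p = snd p")
    case True
    then show ?thesis
      using isCont_divided_diff_diagonal[OF assms(1), of "fst p"] assms(2)
      by (metis continuous_on_eq_continuous_at open_UNIV prod.collapse UNIV_I)
  next
    case False
    have "isCont f x" for x
      using assms(1) by (rule DERIV_isCont)
    then have "isCont (\<lambda>q. (f (fst q) - f (snd q)) / (fst q - snd q)) p"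
      using False by (intro continuous_intros isCont_o2[where f=fst and g=f] isCont_o2[where f=snd and g=f]) auto
    moreover have "\<forall>\<^sub>F q in nhds p. (f (fst q) - f (snd q)) / (fst q - snd q) = divided_diff f f' q"
      using eventually_nhds_in_open[of "{q. fst q \<noteq> snd q}" p] False
      by (auto simp: divided_diff_def open_Collect_neq continuous_on_fst continuous_on_snd elim!: eventually_mono)
    ultimately show ?thesis
      by (simp add: isCont_cong)
  qed
  then show ?thesis
    by (simp add: continuous_on_eq_continuous_at)
qed

section \<open>Couplings\<close>

lemma is_coupling_graph:
  assumes "prob_space M" "sets M = sets borel" "T \<in> borel_measurable borel" "distr M borel T = Q"
  shows "is_coupling (distr M (borel \<Otimes>\<^sub>M borel) (\<lambda>z. (z, T z))) M Q"
proof -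
  have [measurable]: "(\<lambda>z. (z, T z)) \<in> M \<rightarrow>\<^sub>M borel \<Otimes>\<^sub>M borel"
    using assms(2,3) by measurable
  have "distr M borel (\<lambda>z. z) = M"
    using assms(2) by (intro distr_id2) simp
  then show ?thesis
    unfolding is_coupling_def using assms
    by (auto simp: distr_distr comp_def intro: prob_space.prob_space_distr)
qed

lemma is_coupling_swap:
  assumes "is_coupling mu P Q"
  shows "is_coupling (distr mu (borel \<Otimes>\<^sub>M borel) (\<lambda>p. (snd p, fst p))) Q P"
proof -
  have [measurable_cong]: "sets mu = sets (borel \<Otimes>\<^sub>M borel)"
    using assms by (simp add: is_coupling_def)
  have [measurable]: "(\<lambda>p. (snd p, fst p)) \<in> mu \<rightarrow>\<^sub>M borel \<Otimes>\<^sub>M borel"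
    by measurable
  show ?thesis
    using assms unfolding is_coupling_def
    by (auto simp: distr_distr comp_def intro: prob_space.prob_space_distr)
qed

section \<open>The Gaussian tail\<close>

abbreviation \<phi> :: "real \<Rightarrow> real" where "\<phi> \<equiv> std_normal_density"

lemma std_normal_density_pos: "0 < \<phi> x"
  by (simp add: normal_density_pos)

lemma continuous_on_std_normal_density[continuous_intros]: "continuous_on A \<phi>"
  unfolding std_normal_density_def by (intro continuous_intros) simp

lemma std_normal_density_has_derivative: "(\<phi> has_real_derivative - x * \<phi> x) (at x)"
  unfolding normal_density_def by (auto intro!: derivative_eq_intros simp: power2_eq_square field_simps)

lemma std_normal_density_at_top: "(\<phi> \<longlongrightarrow> 0) at_top"
  unfolding std_normal_density_def by real_asymp

lemma std_normal_density_translate: "\<phi> (e + s) = exp (- e\<^sup>2 / 2 - e * s) * \<phi> s"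
  unfolding std_normal_density_def by (simp add: power2_eq_square field_simps flip: exp_add)

lemma real_distribution_std_gauss: "real_distribution std_gauss"
  unfolding std_gauss_def by (rule real_dist_normal_dist)

interpretation std_gauss: real_distribution std_gauss
  by (rule real_distribution_std_gauss)

lemma sets_std_gauss[simp, measurable_cong]: "sets std_gauss = sets borel"
  and space_std_gauss[simp]: "space std_gauss = UNIV"
  by (simp_all add: std_gauss_def)

lemma integral_std_gauss:
  assumes [measurable]: "f \<in> borel_measurable borel"
  shows "integral\<^sup>L std_gauss f = (\<integral>t. \<phi> t * f t \<partial>lborel)"
    and "integrable std_gauss f \<longleftrightarrow> integrable lborel (\<lambda>t. \<phi> t * f t)"
  unfolding std_gauss_def by (simp_all add: integral_density integrable_density)

lemma emeasure_std_gauss_translate: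
  assumes [measurable]: "B \<in> sets borel"
  shows "emeasure std_gauss ((\<lambda>s. s - e) -` B) =
    (\<integral>\<^sup>+s. ennreal (exp (- e\<^sup>2 / 2 - e * s)) * indicator B s \<partial>std_gauss)"
proof -
  have "(\<lambda>s. s - e) -` B \<in> sets borel"
    by (rule measurable_sets_borel[OF _ assms]) simp
  then have "emeasure std_gauss ((\<lambda>s. s - e) -` B) = (\<integral>\<^sup>+s. ennreal (\<phi> s) * indicator B (s - e) \<partial>lborel)"
    unfolding std_gauss_def by (subst emeasure_density) (auto simp: indicator_def intro!: nn_integral_cong)
  also have "\<dots> = (\<integral>\<^sup>+s. ennreal (\<phi> (e + s)) * indicator B s \<partial>lborel)"
    using nn_integral_real_affine[of "\<lambda>s. ennreal (\<phi> s) * indicator B (s - e)" 1 e] by simp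
  also have "\<dots> = (\<integral>\<^sup>+s. ennreal (exp (- e\<^sup>2 / 2 - e * s)) * indicator B s \<partial>std_gauss)"
    unfolding std_gauss_def std_normal_density_translate
    by (simp add: nn_integral_density ennreal_mult' mult_ac)
  finally show ?thesis .
qed

lemma std_gauss_translate_ge:
  assumes "B \<in> sets borel" "B \<subseteq> {..a}" "0 \<le> e"
  shows "exp (- e\<^sup>2 / 2 - e * a) * measure std_gauss B \<le> measure std_gauss ((\<lambda>s. s - e) -` B)"
proof -
  have "ennreal (exp (- e\<^sup>2 / 2 - e * a)) * emeasure std_gauss B
      = (\<integral>\<^sup>+s. ennreal (exp (- e\<^sup>2 / 2 - e * a)) * indicator B s \<partial>std_gauss)"
    using assms(1) by (simp add: nn_integral_cmult_indicator)
  also have "\<dots> \<le> emeasure std_gauss ((\<lambda>s. s - e) -` B)"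
    unfolding emeasure_std_gauss_translate[OF assms(1)] using assms(2,3)
    by (intro nn_integral_mono) (auto simp: mult_left_mono split: split_indicator)
  finally show ?thesis
    by (simp add: std_gauss.emeasure_eq_measure flip: ennreal_mult)
qed

lemma std_gauss_translate_le:
  assumes "B \<in> sets borel" "B \<subseteq> {a..}" "0 \<le> e"
  shows "measure std_gauss ((\<lambda>s. s - e) -` B) \<le> exp (- e\<^sup>2 / 2 - e * a) * measure std_gauss B"
proof -
  have "emeasure std_gauss ((\<lambda>s. s - e) -` B)
      \<le> (\<integral>\<^sup>+s. ennreal (exp (- e\<^sup>2 / 2 - e * a)) * indicator B s \<partial>std_gauss)"
    unfolding emeasure_std_gauss_translate[OF assms(1)] using assms(2,3)
    by (intro nn_integral_mono) (auto simp: mult_left_mono split: split_indicator)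
  also have "\<dots> = ennreal (exp (- e\<^sup>2 / 2 - e * a)) * emeasure std_gauss B"
    using assms(1) by (simp add: nn_integral_cmult_indicator)
  finally show ?thesis
    by (simp add: std_gauss.emeasure_eq_measure flip: ennreal_mult)
qed

definition gauss_tail :: "real \<Rightarrow> real" where
  "gauss_tail u = measure std_gauss {u<..}"

lemma gauss_tail_split: "u \<le> w \<Longrightarrow> gauss_tail u = measure std_gauss {u<..w} + gauss_tail w"
  unfolding gauss_tail_def
  by (subst std_gauss.finite_measure_Union[symmetric]) (auto intro!: arg_cong[where f="measure _"])

lemma gauss_tail_log_concave:
  assumes "u \<le> v" "0 \<le> t"
  shows "gauss_tail (v + t) * gauss_tail u \<le> gauss_tail (u + t) * gauss_tail v"
proof -
  define e where "e = v - u"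
  define c where "c = exp (- e\<^sup>2 / 2 - e * (u + t))"
  have "0 \<le> e" using assms(1) by (simp add: e_def)
  \<comment> \<open>Translating by e maps (u, u + t] onto (v, v + t] and (u + t, \<infinity>) onto (v + t, \<infinity>); the
     likelihood ratio of the translate is at least c on the first set and at most c on the second.\<close>
  have "(\<lambda>s. s - e) -` {u<..u + t} = {v<..v + t}" "(\<lambda>s. s - e) -` {u + t<..} = {v + t<..}"
    by (auto simp: e_def)
  then have head: "c * measure std_gauss {u<..u + t} \<le> measure std_gauss {v<..v + t}"
    and tail: "gauss_tail (v + t) \<le> c * gauss_tail (u + t)"
    using std_gauss_translate_ge[of "{u<..u + t}" "u + t" e] std_gauss_translate_le[of "{u + t<..}" "u + t" e]
      \<open>0 \<le> e\<close> by (simp_all add: c_def gauss_tail_def subset_eq)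
  have "gauss_tail (v + t) * measure std_gauss {u<..u + t} \<le> c * gauss_tail (u + t) * measure std_gauss {u<..u + t}"
    using tail by (simp add: mult_right_mono)
  also have "\<dots> \<le> gauss_tail (u + t) * measure std_gauss {v<..v + t}"
    using mult_left_mono[OF head, of "gauss_tail (u + t)"] by (simp add: gauss_tail_def mult_ac)
  finally show ?thesis
    using gauss_tail_split[of u "u + t"] gauss_tail_split[of v "v + t"] assms(2)
    by (simp add: distrib_left distrib_right mult.commute[of "gauss_tail (v + t)"])
qed

lemma gauss_tail_diff_eq_integral:
  assumes "u \<le> w"
  shows "gauss_tail u - gauss_tail w = integral {u..w} \<phi>"
proof -
  have "gauss_tail u - gauss_tail w = (\<integral>t. \<phi> t * indicator {u<..w} t \<partial>lborel)"
    using gauss_tail_split[OF assms] integral_std_gauss(1)[of "indicator {u<..w}"] by simp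
  also have "\<dots> = (LINT t:{u..w}|lborel. \<phi> t)"
    unfolding set_lebesgue_integral_def
    by (rule integral_cong_AE) (auto intro!: eventually_mono[OF AE_lborel_singleton[of u]] split: split_indicator)
  also have "\<dots> = integral {u..w} \<phi>"
    by (intro set_borel_integral_eq_integral borel_integrable_atLeastAtMost' continuous_on_std_normal_density)
  finally show ?thesis .
qed

lemma gauss_tail_has_derivative: "(gauss_tail has_real_derivative - \<phi> u) (at u)"
proof -
  have "((\<lambda>w. integral {u - 1..w} \<phi>) has_real_derivative \<phi> u) (at u within {u - 1..u + 1})"
    by (rule integral_has_real_derivative) (auto intro: continuous_on_std_normal_density)
  then have "((\<lambda>w. integral {u - 1..w} \<phi>) has_real_derivative \<phi> u) (at u)"
    by (simp add: at_within_Icc_at)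
  from DERIV_diff[OF DERIV_const this]
  have "((\<lambda>w. gauss_tail (u - 1) - integral {u - 1..w} \<phi>) has_real_derivative - \<phi> u) (at u)"
    by simp
  then show ?thesis
  proof (rule has_field_derivative_transform_within_open)
    show "gauss_tail (u - 1) - integral {u - 1..w} \<phi> = gauss_tail w" if "w \<in> {u - 1<..<u + 1}" for w
      using gauss_tail_diff_eq_integral[of "u - 1" w] that by simp
  qed simp_all
qed

lemma continuous_on_gauss_tail[continuous_intros]: "continuous_on A gauss_tail"
  using gauss_tail_has_derivative by (meson DERIV_isCont continuous_at_imp_continuous_on)

lemma gauss_tail_strict_antimono: "u < w \<Longrightarrow> gauss_tail w < gauss_tail u"
  by (rule DERIV_neg_imp_decreasing[of u w gauss_tail])
     (use gauss_tail_has_derivative std_normal_density_pos in \<open>auto intro!: exI[of _ "- \<phi> _"]\<close>)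

lemma gauss_tail_less_iff: "gauss_tail u < gauss_tail w \<longleftrightarrow> w < u"
  using gauss_tail_strict_antimono by (metis not_less_iff_gr_or_eq)

lemma gauss_tail_le_iff: "gauss_tail u \<le> gauss_tail w \<longleftrightarrow> w \<le> u"
  using gauss_tail_less_iff by (meson not_less)

lemma gauss_tail_pos: "0 < gauss_tail u"
  using gauss_tail_strict_antimono[of u "u + 1"] measure_nonneg[of std_gauss "{u + 1<..}"]
  unfolding gauss_tail_def by linarith

lemma gauss_tail_at_top: "(gauss_tail \<longlongrightarrow> 0) at_top"
proof -
  have "gauss_tail u = 1 - cdf std_gauss u" for u
  proof -
    have "{u<..} = space std_gauss - {..u}"
      by auto
    then show ?thesis
      using std_gauss.prob_compl[of "{..u}"] unfolding gauss_tail_def cdf_def by simp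
  qed
  then have "gauss_tail = (\<lambda>u. 1 - cdf std_gauss u)" ..
  moreover have "((\<lambda>u. 1 - cdf std_gauss u) \<longlongrightarrow> 1 - 1) at_top"
    by (rule tendsto_diff[OF tendsto_const std_gauss.cdf_lim_at_top_prob])
  ultimately show ?thesis by simp
qed

lemma gauss_tail_attains:
  assumes "0 < c" "c < gauss_tail v"
  obtains t where "v < t" "gauss_tail t = c"
proof -
  obtain w where "gauss_tail w < c"
    using order_tendstoD(2)[OF gauss_tail_at_top assms(1)] by (auto simp: eventually_at_top_linorder)
  then have "gauss_tail (max v w) \<le> c"
    using gauss_tail_le_iff[of "max v w" w] by linarith
  moreover have "\<forall>t. isCont gauss_tail t"
    using DERIV_isCont[OF gauss_tail_has_derivative] by blast
  ultimately have "\<exists>t\<ge>v. t \<le> max v w \<and> gauss_tail t = c"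
    using assms(2) by (intro IVT2) auto
  then obtain t where "v \<le> t" "gauss_tail t = c"
    by blast
  moreover from this have "t \<noteq> v"
    using assms(2) by auto
  ultimately show thesis
    using that[of t] by simp
qed

section \<open>The conditioned shifted Gaussian\<close>

lemma emeasure_shifted_gauss_pos:
  "emeasure (distr std_gauss borel (\<lambda>t. t + x)) {0<..} = gauss_tail (- x)"
proof -
  have "(\<lambda>t. t + x) -` {0<..} = {- x<..}"
    by auto
  then show ?thesis
    by (simp add: emeasure_distr gauss_tail_def std_gauss.emeasure_eq_measure)
qed

lemma cond_shifted_gauss_eq_density:
  "cond_shifted_gauss x =
    density (distr std_gauss borel (\<lambda>t. t + x)) (\<lambda>z. ennreal (indicator {0<..} z / gauss_tail (- x)))"
  unfolding cond_shifted_gauss_def uniform_measure_def emeasure_shifted_gauss_pos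
  using gauss_tail_pos[of "- x"]
  by (intro density_cong) (auto split: split_indicator simp flip: divide_ennreal)

lemma sets_cond_shifted_gauss[simp, measurable_cong]: "sets (cond_shifted_gauss x) = sets borel"
  and space_cond_shifted_gauss[simp]: "space (cond_shifted_gauss x) = UNIV"
  by (simp_all add: cond_shifted_gauss_def)

lemma real_distribution_cond_shifted_gauss: "real_distribution (cond_shifted_gauss x)"
proof -
  have "prob_space (cond_shifted_gauss x)"
    unfolding cond_shifted_gauss_def using gauss_tail_pos[of "- x"]
    by (intro prob_space_uniform_measure) (simp_all add: emeasure_shifted_gauss_pos)
  then show ?thesis
    by (simp add: real_distribution_def real_distribution_axioms_def)
qed

lemma AE_cond_shifted_gauss_pos: "AE z in cond_shifted_gauss x. 0 < z"
  unfolding cond_shifted_gauss_def by (rule AE_uniform_measureI) auto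

definition cond_gauss_tail :: "real \<Rightarrow> real \<Rightarrow> real" where
  "cond_gauss_tail x z = gauss_tail (z - x) / gauss_tail (- x)"

lemma cdf_cond_shifted_gauss:
  "cdf (cond_shifted_gauss x) z = (if z \<le> 0 then 0 else 1 - cond_gauss_tail x z)"
proof -
  let ?D = "distr std_gauss borel (\<lambda>t. t + x)"
  interpret D: prob_space ?D
    by (rule std_gauss.prob_space_distr) simp
  have "(\<lambda>t. t + x) -` {0<..} = {- x<..}" "(\<lambda>t. t + x) -` ({0<..} \<inter> {..z}) = {- x<..z - x}"
    by auto
  then have "cdf (cond_shifted_gauss x) z = measure std_gauss {- x<..z - x} / gauss_tail (- x)"
    unfolding cdf_def cond_shifted_gauss_def using gauss_tail_pos[of "- x"]
    by (subst measure_uniform_measure)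
       (simp_all add: emeasure_shifted_gauss_pos measure_distr D.emeasure_eq_measure gauss_tail_def)
  then show ?thesis
    using gauss_tail_split[of "- x" "z - x"] gauss_tail_pos[of "- x"]
    by (auto simp: cond_gauss_tail_def field_simps)
qed

lemma integral_cond_shifted_gauss:
  assumes [measurable]: "f \<in> borel_measurable borel"
  shows "integrable (cond_shifted_gauss x) f \<longleftrightarrow> integrable std_gauss (\<lambda>t. indicator {- x<..} t * f (t + x))"
    and "integral\<^sup>L (cond_shifted_gauss x) f = (\<integral>t. indicator {- x<..} t * f (t + x) \<partial>std_gauss) / gauss_tail (- x)"
proof -
  have ind: "indicator {0<..} (t + x) = (indicator {- x<..} t :: real)" for t
    by (simp split: split_indicator)
  have "0 < gauss_tail (- x)"
    by (rule gauss_tail_pos)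
  then show "integrable (cond_shifted_gauss x) f \<longleftrightarrow> integrable std_gauss (\<lambda>t. indicator {- x<..} t * f (t + x))"
    unfolding cond_shifted_gauss_eq_density
    using integrable_mult_right_iff[of std_gauss "\<lambda>t. indicator {- x<..} t * f (t + x)" "1 / gauss_tail (- x)"]
    by (simp add: integrable_density integrable_distr_eq ind)
  show "integral\<^sup>L (cond_shifted_gauss x) f = (\<integral>t. indicator {- x<..} t * f (t + x) \<partial>std_gauss) / gauss_tail (- x)"
    unfolding cond_shifted_gauss_eq_density using \<open>0 < gauss_tail (- x)\<close>
    by (simp add: integral_density integral_distr ind)
qed

lemma std_gauss_tail_moment:
  "has_bochner_integral std_gauss (\<lambda>t. indicator {u<..} t * t) (\<phi> u)"
proof -
  have "integrable lborel (\<lambda>t. indicator {u<..} t * (\<phi> t * t))"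
    using integrable_mult_indicator[of "{u<..}" lborel "\<lambda>t. \<phi> t * t"] integrable_std_normal_moment[of 1]
    by simp
  then have int: "set_integrable lborel (einterval u \<infinity>) (\<lambda>t. t * \<phi> t)"
    by (simp add: set_integrable_def mult_ac)
  have "(LBINT t=u..\<infinity>. t * \<phi> t) = 0 - (- \<phi> u)"
  proof (rule interval_integral_FTC_integrable[OF _ _ _ int])
    show "((\<lambda>t. - \<phi> t) has_vector_derivative t * \<phi> t) (at t)" for t
      using std_normal_density_has_derivative[of t]
      by (auto intro!: derivative_eq_intros simp flip: has_real_derivative_iff_has_vector_derivative)
    show "(((\<lambda>t. - \<phi> t) \<circ> real_of_ereal) \<longlongrightarrow> - \<phi> u) (at_right (ereal u))"
      unfolding ereal_tendsto_simps
      by (intro tendsto_minus tendsto_within_subset[OF continuous_on_std_normal_density[of UNIV, unfolded continuous_on_def, rule_format]]) simp_all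
    show "(((\<lambda>t. - \<phi> t) \<circ> real_of_ereal) \<longlongrightarrow> 0) (at_left \<infinity>)"
      unfolding ereal_tendsto_simps using tendsto_minus[OF std_normal_density_at_top] by simp
  qed (auto simp: std_normal_density_def intro!: continuous_intros)
  then have "(LINT t:{u<..}|lborel. t * \<phi> t) = \<phi> u"
    by (simp add: interval_integral_to_infinity_eq)
  with int show ?thesis
    by (simp add: has_bochner_integral_iff integral_std_gauss set_integrable_def set_lebesgue_integral_def mult_ac)
qed

definition cond_gauss_mean :: "real \<Rightarrow> real" where
  "cond_gauss_mean x = x + \<phi> x / gauss_tail (- x)"

lemma has_bochner_integral_cond_shifted_gauss:
  "has_bochner_integral (cond_shifted_gauss x) (\<lambda>z. z) (cond_gauss_mean x)"
proof -
  have "has_bochner_integral std_gauss (indicator {- x<..}) (gauss_tail (- x))"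
    unfolding gauss_tail_def
    by (rule has_bochner_integral_real_indicator) (simp_all add: std_gauss.emeasure_finite less_top[symmetric])
  then have "has_bochner_integral std_gauss (\<lambda>t. indicator {- x<..} t * t + x * indicator {- x<..} t)
      (\<phi> (- x) + x * gauss_tail (- x))"
    by (intro has_bochner_integral_add std_gauss_tail_moment has_bochner_integral_mult_right)
  then have "has_bochner_integral std_gauss (\<lambda>t. indicator {- x<..} t * (t + x)) (\<phi> x + x * gauss_tail (- x))"
    by (simp add: algebra_simps std_normal_density_def)
  then show ?thesis
    using gauss_tail_pos[of "- x"]
    by (simp add: has_bochner_integral_iff integral_cond_shifted_gauss cond_gauss_mean_def field_simps)
qed

lemma cond_gauss_mean_pos: "0 < cond_gauss_mean x"
proof -
  interpret P: real_distribution "cond_shifted_gauss x"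
    by (rule real_distribution_cond_shifted_gauss)
  have "(\<integral>z. 0 \<partial>cond_shifted_gauss x) < (\<integral>z. z \<partial>cond_shifted_gauss x)"
    using has_bochner_integral_cond_shifted_gauss[of x] AE_cond_shifted_gauss_pos[of x]
    by (intro P.integral_less_AE_space) (simp_all add: has_bochner_integral_iff P.emeasure_space_1[simplified])
  then show ?thesis
    using has_bochner_integral_cond_shifted_gauss[of x] by (simp add: has_bochner_integral_iff)
qed

definition cond_gauss_mean_deriv :: "real \<Rightarrow> real" where
  "cond_gauss_mean_deriv x = 1 - \<phi> x * cond_gauss_mean x / gauss_tail (- x)"

lemma cond_gauss_mean_has_derivative: "(cond_gauss_mean has_real_derivative cond_gauss_mean_deriv x) (at x)"
proof -
  have tail: "((\<lambda>x. gauss_tail (- x)) has_real_derivative \<phi> x) (at x)"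
    using DERIV_chain2[OF gauss_tail_has_derivative DERIV_minus[OF DERIV_ident]] by (simp add: std_normal_density_def)
  have "(cond_gauss_mean has_real_derivative
      1 + (- x * \<phi> x * gauss_tail (- x) - \<phi> x * \<phi> x) / (gauss_tail (- x) * gauss_tail (- x))) (at x)"
    unfolding cond_gauss_mean_def[abs_def] using gauss_tail_pos[of "- x"]
    by (intro DERIV_add DERIV_ident DERIV_divide std_normal_density_has_derivative tail) simp
  then show ?thesis
    using gauss_tail_pos[of "- x"]
    by (simp add: cond_gauss_mean_deriv_def cond_gauss_mean_def field_simps)
qed

lemma cond_gauss_mean_deriv_less_1: "cond_gauss_mean_deriv x < 1"
  using cond_gauss_mean_pos[of x] std_normal_density_pos[of x] gauss_tail_pos[of "- x"]
  by (simp add: cond_gauss_mean_deriv_def)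

lemma continuous_on_cond_gauss_mean_deriv: "continuous_on UNIV cond_gauss_mean_deriv"
proof -
  have "continuous_on UNIV cond_gauss_mean"
    using cond_gauss_mean_has_derivative by (meson DERIV_isCont continuous_at_imp_continuous_on)
  moreover have "continuous_on UNIV (\<lambda>x. gauss_tail (- x))"
    by (intro continuous_on_compose2[OF continuous_on_gauss_tail[of UNIV]] continuous_intros) simp
  ultimately show ?thesis
    unfolding cond_gauss_mean_deriv_def using gauss_tail_pos
    by (intro continuous_intros) (auto simp: less_imp_neq[symmetric])
qed

section \<open>The quantile coupling\<close>

lemma cond_gauss_tail_le_iff: "cond_gauss_tail x a \<le> cond_gauss_tail x b \<longleftrightarrow> b \<le> a"
  using gauss_tail_pos[of "- x"] by (simp add: cond_gauss_tail_def divide_le_cancel gauss_tail_le_iff)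

lemma cond_gauss_tail_less_iff: "cond_gauss_tail x a < cond_gauss_tail x b \<longleftrightarrow> b < a"
  using cond_gauss_tail_le_iff[of x b a] by linarith

lemma cond_gauss_tail_eq_iff: "cond_gauss_tail x a = cond_gauss_tail x b \<longleftrightarrow> a = b"
  using cond_gauss_tail_less_iff[of x a b] cond_gauss_tail_less_iff[of x b a]
  by (cases a b rule: linorder_cases) simp_all

lemma cond_gauss_tail_pos: "0 < cond_gauss_tail x z"
  using gauss_tail_pos by (simp add: cond_gauss_tail_def)

lemma cond_gauss_tail_less_1: "0 < z \<Longrightarrow> cond_gauss_tail x z < 1"
  using gauss_tail_pos[of "- x"] gauss_tail_strict_antimono[of "- x" "z - x"] by (simp add: cond_gauss_tail_def)

lemma cond_gauss_tail_attains:
  assumes "0 < c" "c < 1"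
  obtains t where "0 < t" "cond_gauss_tail y t = c"
proof -
  have "0 < c * gauss_tail (- y)" "c * gauss_tail (- y) < gauss_tail (- y)"
    using assms gauss_tail_pos[of "- y"] by simp_all
  then obtain s where "- y < s" "gauss_tail s = c * gauss_tail (- y)"
    by (rule gauss_tail_attains)
  then show thesis
    using that[of "s + y"] gauss_tail_pos[of "- y"] by (simp add: cond_gauss_tail_def)
qed

lemma cond_gauss_tail_mono:
  assumes "x \<le> y" "0 \<le> z"
  shows "cond_gauss_tail x z \<le> cond_gauss_tail y z"
proof -
  have "gauss_tail (z - x) * gauss_tail (- y) \<le> gauss_tail (z - y) * gauss_tail (- x)"
    using gauss_tail_log_concave[of "- y" "- x" z] assms by (simp add: uminus_add_conv_diff)
  then show ?thesis
    using gauss_tail_pos[of "- x"] gauss_tail_pos[of "- y"] by (simp add: cond_gauss_tail_def field_simps)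
qed

text \<open>The value 0 on the null set z \<le> 0 keeps the map monotone, hence Borel measurable.\<close>

definition gauss_transport :: "real \<Rightarrow> real \<Rightarrow> real \<Rightarrow> real" where
  "gauss_transport x y z = (if z \<le> 0 then 0 else THE t. cond_gauss_tail y t = cond_gauss_tail x z)"

lemma gauss_transport_nonpos: "z \<le> 0 \<Longrightarrow> gauss_transport x y z = 0"
  by (simp add: gauss_transport_def)

lemma
  assumes "0 < z"
  shows gauss_transport_pos: "0 < gauss_transport x y z"
    and cond_gauss_tail_transport: "cond_gauss_tail y (gauss_transport x y z) = cond_gauss_tail x z"
proof -
  obtain t where t: "0 < t" "cond_gauss_tail y t = cond_gauss_tail x z"
    using cond_gauss_tail_attains[OF cond_gauss_tail_pos cond_gauss_tail_less_1[OF assms]] .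
  have "(THE s. cond_gauss_tail y s = cond_gauss_tail x z) = t"
    using t(2) by (rule the_equality) (metis t(2) cond_gauss_tail_eq_iff)
  then have "gauss_transport x y z = t"
    using assms by (simp add: gauss_transport_def)
  with t show "0 < gauss_transport x y z" "cond_gauss_tail y (gauss_transport x y z) = cond_gauss_tail x z"
    by simp_all
qed

lemma gauss_transport_le_iff:
  assumes "0 < z" "0 < t"
  shows "gauss_transport x y z \<le> t \<longleftrightarrow> z \<le> gauss_transport y x t"
proof -
  have "gauss_transport x y z \<le> t \<longleftrightarrow> cond_gauss_tail y t \<le> cond_gauss_tail y (gauss_transport x y z)"
    by (simp add: cond_gauss_tail_le_iff)
  also have "\<dots> \<longleftrightarrow> cond_gauss_tail x (gauss_transport y x t) \<le> cond_gauss_tail x z"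
    using assms by (simp add: cond_gauss_tail_transport)
  also have "\<dots> \<longleftrightarrow> z \<le> gauss_transport y x t"
    by (simp add: cond_gauss_tail_le_iff)
  finally show ?thesis .
qed

lemma gauss_transport_nonneg: "0 \<le> gauss_transport x y z"
  using gauss_transport_pos[of z x y] gauss_transport_nonpos[of z x y] by fastforce

lemma mono_gauss_transport: "mono (gauss_transport x y)"
proof
  fix z w :: real
  assume "z \<le> w"
  show "gauss_transport x y z \<le> gauss_transport x y w"
  proof (cases "0 < z")
    case True
    with \<open>z \<le> w\<close> have w: "0 < w"
      by simp
    have t: "0 < gauss_transport x y w"
      using w by (rule gauss_transport_pos)
    have "w \<le> gauss_transport y x (gauss_transport x y w)"
      using gauss_transport_le_iff[of w "gauss_transport x y w" x y] w t by simp
    with \<open>z \<le> w\<close> show ?thesis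
      using gauss_transport_le_iff[of z "gauss_transport x y w" x y] True t by simp
  next
    case False
    then show ?thesis
      using gauss_transport_nonneg[of x y w] by (simp add: gauss_transport_nonpos)
  qed
qed

lemma borel_measurable_gauss_transport[measurable]: "gauss_transport x y \<in> borel_measurable borel"
  by (rule borel_measurable_mono[OF mono_gauss_transport])

lemma distr_gauss_transport: "distr (cond_shifted_gauss x) borel (gauss_transport x y) = cond_shifted_gauss y"
proof -
  interpret P: real_distribution "cond_shifted_gauss x"
    by (rule real_distribution_cond_shifted_gauss)
  have "cdf (distr (cond_shifted_gauss x) borel (gauss_transport x y)) t = cdf (cond_shifted_gauss y) t" for t
  proof (cases "0 < t")
    case True
    then have "gauss_transport x y -` {..t} = {..gauss_transport y x t}"
      using gauss_transport_le_iff[of _ t x y] gauss_transport_pos[of t y x] gauss_transport_nonpos[of _ x y]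
      by (force simp: not_less)
    with True show ?thesis
      using gauss_transport_pos[of t y x]
      by (simp add: cdf_def measure_distr cdf_cond_shifted_gauss[unfolded cdf_def] cond_gauss_tail_transport)
  next
    case False
    then have "gauss_transport x y -` {..t} \<subseteq> {..0}"
      using gauss_transport_pos[of _ x y] by (force simp: not_less)
    then have "measure (cond_shifted_gauss x) (gauss_transport x y -` {..t}) \<le> cdf (cond_shifted_gauss x) 0"
      unfolding cdf_def by (intro P.finite_measure_mono) simp_all
    with False show ?thesis
      by (simp add: cdf_def measure_distr cdf_cond_shifted_gauss[unfolded cdf_def] measure_le_0_iff)
  qed
  then show ?thesis
    by (intro cdf_unique real_distribution_cond_shifted_gauss P.real_distribution_distr) auto
qed

lemma gauss_transport_ge:
  assumes "0 < z" "x \<le> y"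
  shows "z \<le> gauss_transport x y z"
proof -
  have "cond_gauss_tail y (gauss_transport x y z) = cond_gauss_tail x z"
    using assms(1) by (rule cond_gauss_tail_transport)
  also have "\<dots> \<le> cond_gauss_tail y z"
    using assms by (intro cond_gauss_tail_mono) simp_all
  finally show ?thesis
    by (simp add: cond_gauss_tail_le_iff)
qed

lemma gauss_transport_less:
  assumes "0 < z" "x < y"
  shows "gauss_transport x y z < z + (y - x)"
proof -
  have "gauss_tail (- x) < gauss_tail (- y)"
    using assms(2) by (simp add: gauss_tail_less_iff)
  then have "cond_gauss_tail y (z + (y - x)) < cond_gauss_tail x z"
    using gauss_tail_pos[of "z - x"] gauss_tail_pos[of "- x"]
    by (simp add: cond_gauss_tail_def divide_strict_left_mono)
  also have "\<dots> = cond_gauss_tail y (gauss_transport x y z)"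
    using assms(1) by (rule cond_gauss_tail_transport[symmetric])
  finally show ?thesis
    by (simp add: cond_gauss_tail_less_iff)
qed

lemma cond_shifted_gauss_monotone_coupling:
  assumes "x \<le> y"
  obtains mu where "is_coupling mu (cond_shifted_gauss x) (cond_shifted_gauss y)"
    and "x < y \<Longrightarrow> AE p in mu. \<bar>fst p - snd p\<bar> < y - x"
    and "has_bochner_integral mu (\<lambda>p. \<bar>fst p - snd p\<bar>) (cond_gauss_mean y - cond_gauss_mean x)"
proof
  let ?T = "gauss_transport x y"
  let ?mu = "distr (cond_shifted_gauss x) (borel \<Otimes>\<^sub>M borel) (\<lambda>z. (z, ?T z))"
  interpret P: real_distribution "cond_shifted_gauss x"
    by (rule real_distribution_cond_shifted_gauss)
  show "is_coupling ?mu (cond_shifted_gauss x) (cond_shifted_gauss y)"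
    by (intro is_coupling_graph distr_gauss_transport P.prob_space_axioms) simp_all
  have bounds: "AE z in cond_shifted_gauss x. z \<le> ?T z \<and> (x < y \<longrightarrow> ?T z < z + (y - x))"
    using AE_cond_shifted_gauss_pos[of x]
    by eventually_elim (use assms gauss_transport_ge gauss_transport_less in auto)
  show "AE p in ?mu. \<bar>fst p - snd p\<bar> < y - x" if "x < y"
  proof -
    have "AE z in cond_shifted_gauss x. \<bar>z - ?T z\<bar> < y - x"
      using bounds by eventually_elim (use that in auto)
    then show ?thesis
      by (subst AE_distr_iff) simp_all
  qed
  have "has_bochner_integral (cond_shifted_gauss x) ?T (cond_gauss_mean y)"
    using has_bochner_integral_cond_shifted_gauss[of y]
    by (simp add: has_bochner_integral_iff integrable_distr_eq integral_distr flip: distr_gauss_transport[of x y])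
  from has_bochner_integral_diff[OF this has_bochner_integral_cond_shifted_gauss[of x]]
  have "has_bochner_integral (cond_shifted_gauss x) (\<lambda>z. \<bar>z - ?T z\<bar>) (cond_gauss_mean y - cond_gauss_mean x)"
    by (rule has_bochner_integral_cong_AE[THEN iffD1, rotated 3]) (use bounds in \<open>auto elim!: eventually_mono\<close>)
  then show "has_bochner_integral ?mu (\<lambda>p. \<bar>fst p - snd p\<bar>) (cond_gauss_mean y - cond_gauss_mean x)"
    by (simp add: has_bochner_integral_iff integrable_distr_eq integral_distr)
qed

lemma cond_shifted_gauss_coupling:
  obtains mu where "is_coupling mu (cond_shifted_gauss x) (cond_shifted_gauss x')"
    and "x \<noteq> x' \<Longrightarrow> AE p in mu. \<bar>fst p - snd p\<bar> < \<bar>x - x'\<bar>"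
    and "has_bochner_integral mu (\<lambda>p. \<bar>fst p - snd p\<bar>)
      (sgn (x - x') * (cond_gauss_mean x - cond_gauss_mean x'))"
proof (cases "x \<le> x'")
  case True
  then obtain mu where "is_coupling mu (cond_shifted_gauss x) (cond_shifted_gauss x')"
    and "x < x' \<Longrightarrow> AE p in mu. \<bar>fst p - snd p\<bar> < x' - x"
    and "has_bochner_integral mu (\<lambda>p. \<bar>fst p - snd p\<bar>) (cond_gauss_mean x' - cond_gauss_mean x)"
    using cond_shifted_gauss_monotone_coupling[of x x'] True by blast
  with True show thesis
    by (intro that[of mu]) (auto simp: sgn_if)
next
  case False
  then have "x' < x"
    by simp
  then obtain mu where mu: "is_coupling mu (cond_shifted_gauss x') (cond_shifted_gauss x)"
    and "AE p in mu. \<bar>fst p - snd p\<bar> < x - x'"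
    and "has_bochner_integral mu (\<lambda>p. \<bar>fst p - snd p\<bar>) (cond_gauss_mean x - cond_gauss_mean x')"
    using cond_shifted_gauss_monotone_coupling[OF less_imp_le] by blast
  moreover have [measurable_cong]: "sets mu = sets (borel \<Otimes>\<^sub>M borel)"
    using mu by (simp add: is_coupling_def)
  ultimately show thesis
    using False is_coupling_swap[OF mu]
    by (intro that[of "distr mu (borel \<Otimes>\<^sub>M borel) (\<lambda>p. (snd p, fst p))"])
       (simp_all add: AE_distr_iff has_bochner_integral_iff integrable_distr_eq integral_distr abs_minus_commute)
qed

theorem lemma3p4:
  "\<exists>\<delta> :: real \<times> real \<Rightarrow> real. continuous_on UNIV \<delta> \<and> (\<forall>p. \<delta> p < 1) \<and>
     (\<forall>x x' :: real. \<exists>mu. is_coupling mu (cond_shifted_gauss x) (cond_shifted_gauss x')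
        \<and> (x \<noteq> x' \<longrightarrow> (AE p in mu. \<bar>fst p - snd p\<bar> < \<bar>x - x'\<bar>))
        \<and> integrable mu (\<lambda>p. \<bar>fst p - snd p\<bar>)
        \<and> integral\<^sup>L mu (\<lambda>p. \<bar>fst p - snd p\<bar>) \<le> \<delta> (x, x') * \<bar>x - x'\<bar>)"
proof (intro exI[of _ "divided_diff cond_gauss_mean cond_gauss_mean_deriv"] conjI allI)
  show "continuous_on UNIV (divided_diff cond_gauss_mean cond_gauss_mean_deriv)"
    using cond_gauss_mean_has_derivative continuous_on_cond_gauss_mean_deriv
    by (rule continuous_on_divided_diff)
  show "divided_diff cond_gauss_mean cond_gauss_mean_deriv p < 1" for p
    using divided_diff_mean_value[OF cond_gauss_mean_has_derivative] cond_gauss_mean_deriv_less_1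
    by metis
  fix x x' :: real
  obtain mu where "is_coupling mu (cond_shifted_gauss x) (cond_shifted_gauss x')"
    and "x \<noteq> x' \<Longrightarrow> AE p in mu. \<bar>fst p - snd p\<bar> < \<bar>x - x'\<bar>"
    and "has_bochner_integral mu (\<lambda>p. \<bar>fst p - snd p\<bar>)
      (sgn (x - x') * (cond_gauss_mean x - cond_gauss_mean x'))"
    using cond_shifted_gauss_coupling[of x x'] by blast
  then show "\<exists>mu. is_coupling mu (cond_shifted_gauss x) (cond_shifted_gauss x')
      \<and> (x \<noteq> x' \<longrightarrow> (AE p in mu. \<bar>fst p - snd p\<bar> < \<bar>x - x'\<bar>))
      \<and> integrable mu (\<lambda>p. \<bar>fst p - snd p\<bar>)
      \<and> integral\<^sup>L mu (\<lambda>p. \<bar>fst p - snd p\<bar>)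
        \<le> divided_diff cond_gauss_mean cond_gauss_mean_deriv (x, x') * \<bar>x - x'\<bar>"
    by (intro exI[of _ mu]) (simp add: has_bochner_integral_iff divided_diff_mult_abs)
qed

end
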